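(* Let $A \in \mathbb{C}^{n \times n}$, and fix $A^-\in A\{1\}$ and $A^{GD}\in A\{GD\}$. Then $A^{GD1}=A^{GD}AA^{-}$ is the unique matrix $X \in \mathbb{C}^{n \times n}$ satisfying $$AX = P_{R(A),N(AA^{-})} \quad\text{and}\quad R(X)\subseteq R(A^{GD}A).$$
   Context: For $A\in\mathbb{C}^{n\times n}$, $ind(A)$ is the smallest nonnegative integer $k$ with $\mathrm{rank}(A^k)=\mathrm{rank}(A^{k+1})$. $A\{1\}$ is the set of matrices $X$ with $AXA=A$. With $k=ind(A)$, $A\{GD\}$ is the set of G-Drazin inverses of $A$: matrices $X$ with $AXA=A$, $XA^{k+1}=A^k$, $A^{k+1}X=A^k$. $R(\cdot)$, $N(\cdot)$ denote range and null space; $P_{S,T}$ is the projector onto $S$ along $T$. *)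

theory Defs
  imports "HOL-Analysis.Analysis"
begin

type_synonym 'n cmat = "complex ^'n ^'n"

definition mrange :: "complex ^'n ^'m \<Rightarrow> (complex ^'m) set" where
  "mrange A = range (\<lambda>x. A *v x)"

definition mnull :: "complex ^'n ^'m \<Rightarrow> (complex ^'n) set" where
  "mnull A = {x. A *v x = 0}"

definition mrank :: "complex ^'n ^'m \<Rightarrow> nat" where
  "mrank A = dim (mrange A)"

primrec mpow :: "complex ^'n ^'n \<Rightarrow> nat \<Rightarrow> complex ^'n ^'n" where
  "mpow A 0 = mat 1"
| "mpow A (Suc k) = A ** mpow A k"

definition mindex :: "complex ^'n ^'n \<Rightarrow> nat" where
  "mindex A = (LEAST k. mrank (mpow A k) = mrank (mpow A (Suc k)))"

definition inner_inv :: "complex ^'n ^'n \<Rightarrow> (complex ^'n ^'n) set" where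
  "inner_inv A = {X. A ** X ** A = A}"

definition gdrazin :: "complex ^'n ^'n \<Rightarrow> (complex ^'n ^'n) set" where
  "gdrazin A = {X. A ** X ** A = A
     \<and> X ** mpow A (Suc (mindex A)) = mpow A (mindex A)
     \<and> mpow A (Suc (mindex A)) ** X = mpow A (mindex A)}"

text \<open>The projector P_{S,T} onto S along T (meaningful when S and T are
  complementary subspaces): the unique matrix P with Px \<in> S and x - Px \<in> T.\<close>
definition proj_along :: "(complex ^'n) set \<Rightarrow> (complex ^'n) set \<Rightarrow> complex ^'n ^'n" where
  "proj_along S T = (THE P. \<forall>x. P *v x \<in> S \<and> x - P *v x \<in> T)"

end

theory Submission
  imports Defs
begin

text \<open>If G is an inner inverse of A, then A G and G A are idempotent. So the projector
  onto R(A) = R(A A^-) along N(A A^-) is A A^- itself, and R(X) \<subseteq> R(A^GD A) amounts to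
  X = A^GD A X; hence A X = A A^- forces X = A^GD A A^-.\<close>

lemma inner_inverse_mult_idempotent:
  fixes A G :: "'a::semiring_1 ^'n ^'n"
  assumes "A ** G ** A = A"
  shows "(A ** G) ** (A ** G) = A ** G" and "(G ** A) ** (G ** A) = G ** A"
  by (metis assms matrix_mul_assoc)+

lemma mrange_matrix_mul_subset:
  fixes B :: "complex ^'k ^'m" and C :: "complex ^'n ^'k"
  shows "mrange (B ** C) \<subseteq> mrange B"
  unfolding mrange_def by (auto simp: matrix_vector_mul_assoc[symmetric])

lemma mrange_mult_inner_inverse:
  fixes A G :: "complex ^'n ^'n"
  assumes "A ** G ** A = A"
  shows "mrange (A ** G) = mrange A"
proof
  show "mrange (A ** G) \<subseteq> mrange A" by (rule mrange_matrix_mul_subset)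
  have "mrange A = mrange (A ** G ** A)" using assms by simp
  also have "\<dots> \<subseteq> mrange (A ** G)"
    by (rule mrange_matrix_mul_subset)
  finally show "mrange A \<subseteq> mrange (A ** G)" .
qed

lemma idempotent_mult_eq_of_mrange_subset:
  fixes E :: "complex ^'n ^'n" and X :: "complex ^'k ^'n"
  assumes "E ** E = E" and "mrange X \<subseteq> mrange E"
  shows "E ** X = X"
proof (rule iffD2[OF matrix_eq], rule allI)
  fix v
  obtain w where w: "X *v v = E *v w"
    using assms(2) unfolding mrange_def by blast
  have "(E ** X) *v v = (E ** E) *v w"
    by (simp add: w matrix_vector_mul_assoc[symmetric])
  then show "(E ** X) *v v = X *v v" using assms(1) w by simp
qed

lemma proj_along_mrange_mnull_idempotent:
  fixes E :: "complex ^'n ^'n"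
  assumes "E ** E = E"
  shows "proj_along (mrange E) (mnull E) = E"
  unfolding proj_along_def
proof (rule the_equality)
  have "E *v (x - E *v x) = 0" for x
    using assms by (simp add: matrix_vector_mult_diff_distrib matrix_vector_mul_assoc)
  then show "\<forall>x. E *v x \<in> mrange E \<and> x - E *v x \<in> mnull E"
    unfolding mrange_def mnull_def by simp
next
  fix P :: "complex ^'n ^'n"
  assume P: "\<forall>x. P *v x \<in> mrange E \<and> x - P *v x \<in> mnull E"
  show "P = E"
  proof (rule iffD2[OF matrix_eq], rule allI)
    fix x
    obtain y where y: "P *v x = E *v y" using P unfolding mrange_def by blast
    have "E *v x = E *v (P *v x)"
      using P unfolding mnull_def by (simp add: matrix_vector_mult_diff_distrib)
    also have "\<dots> = P *v x"
      using assms y by (metis matrix_vector_mul_assoc)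
    finally show "P *v x = E *v x" by simp
  qed
qed

theorem theorem2p4:
  fixes A Am Agd :: "complex ^'n ^'n"
  assumes "Am \<in> inner_inv A" and "Agd \<in> gdrazin A"
  shows "\<forall>X :: complex ^'n ^'n.
           (A ** X = proj_along (mrange A) (mnull (A ** Am))
            \<and> mrange X \<subseteq> mrange (Agd ** A))
           \<longleftrightarrow> X = Agd ** A ** Am"
proof
  fix X :: "complex ^'n ^'n"
  have Am: "A ** Am ** A = A" using assms(1) unfolding inner_inv_def by simp
  have Agd: "A ** Agd ** A = A" using assms(2) unfolding gdrazin_def by simp
  have proj: "proj_along (mrange A) (mnull (A ** Am)) = A ** Am"
    using proj_along_mrange_mnull_idempotent[OF inner_inverse_mult_idempotent(1)[OF Am]]
    by (simp add: mrange_mult_inner_inverse[OF Am])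
  have "(A ** X = A ** Am \<and> mrange X \<subseteq> mrange (Agd ** A)) \<longleftrightarrow> X = Agd ** A ** Am"
  proof
    assume X: "A ** X = A ** Am \<and> mrange X \<subseteq> mrange (Agd ** A)"
    have "X = Agd ** A ** X"
      using idempotent_mult_eq_of_mrange_subset[OF inner_inverse_mult_idempotent(2)[OF Agd]] X
      by metis
    also have "\<dots> = Agd ** (A ** Am)" using X by (metis matrix_mul_assoc)
    finally show "X = Agd ** A ** Am" by (simp add: matrix_mul_assoc)
  next
    assume "X = Agd ** A ** Am"
    then show "A ** X = A ** Am \<and> mrange X \<subseteq> mrange (Agd ** A)"
      using Agd mrange_matrix_mul_subset by (metis matrix_mul_assoc)
  qed
  then show "(A ** X = proj_along (mrange A) (mnull (A ** Am))
              \<and> mrange X \<subseteq> mrange (Agd ** A)) \<longleftrightarrow> X = Agd ** A ** Am"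
    by (simp add: proj)
qed

end
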